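(* Let $\alpha,\beta\in\mathbb{C}$ with $\Re(\alpha)>-1$ and $\Re(\beta)>-1$, and let $n\geq 1$ be an integer. Then for all $z,w\in\mathbb{C}$ with $|z|<1$, $|w|<1$ and $w\notin(-1,0]$, $$\frac{\partial }{\partial z} P_{n}^{(\alpha ,\beta )} (z,w)+ \sqrt{w}\, \frac{\partial }{\partial w} P_{n}^{(\alpha ,\beta )} (z,w)-\frac{1+\alpha +\beta +n}{4}\, P_{n-1}^{(1+\alpha ,1+\beta )} (z,w)=0 .$$
   Context: For $\lambda\in\mathbb{C}$ and an integer $m\ge 0$, $(\lambda)_m$ denotes the Pochhammer symbol: $(\lambda)_0=1$ and $(\lambda)_m=\lambda(\lambda+1)\cdots(\lambda+m-1)$ for $m\ge1$. $\sqrt{w}$ denotes the principal branch of the square root. For $\alpha,\beta\in\mathbb{C}$ with $\Re(\alpha)>-1$, $\Re(\beta)>-1$ and an integer $n\ge 0$, the two-variable (complex bivariate) Jacobi polynomial is $$P_{n}^{(\alpha ,\beta )} (z,w)=\sum _{k=0}^{n} \frac{(1+\alpha)_{n}\, (1+\alpha +\beta)_{n+k}}{k!\,(n-k)!\,(1+\alpha)_{k}\, (1+\alpha +\beta)_{n} } \left(\frac{z-\sqrt{w} }{2} \right)^{k},$$ where the quotient $(1+\alpha+\beta)_{n+k}/(1+\alpha+\beta)_n$ is understood as $(1+\alpha+\beta+n)_k$. The symbol $P_{n-1}^{(1+\alpha ,1+\beta )}$ denotes the same polynomial with parameters $\alpha,\beta$ replaced by $1+\alpha,1+\beta$ and degree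 index $n-1$. *)

theory Defs
  imports "HOL-Analysis.Analysis"
begin

text \<open>Complex bivariate Jacobi polynomial. The quotient
  (1+a+b)_(n+k) / (1+a+b)_n is taken as (1+a+b+n)_k, as in the paper.
  csqrt is the principal branch of the complex square root.\<close>
definition jacobiP :: "complex \<Rightarrow> complex \<Rightarrow> nat \<Rightarrow> complex \<Rightarrow> complex \<Rightarrow> complex" where
  "jacobiP a b n z w =
     (\<Sum>k=0..n. pochhammer (1 + a) n * pochhammer (1 + a + b + of_nat n) k
        / (fact k * fact (n - k) * pochhammer (1 + a) k)
        * ((z - csqrt w) / 2) ^ k)"

end

theory Submission
  imports Defs
begin

text \<open>Both partial derivatives of the Jacobi polynomial see only the variable u = (z - sqrt w)/2,
  in which it is a polynomial in one variable, and the operator d/dz + sqrt w d/dw acts on any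
  function of u as (1/4) d/du. The identity thus reduces to differentiating the one-variable
  polynomial term by term, a Pochhammer-symbol computation. Of the hypotheses only Re a > -1
  (nonvanishing denominators) and w off the branch cut of sqrt are needed.\<close>

definition jacobi_coeff :: "'a::field_char_0 \<Rightarrow> 'a \<Rightarrow> nat \<Rightarrow> nat \<Rightarrow> 'a" where
  "jacobi_coeff a b n k =
     pochhammer (1 + a) n * pochhammer (1 + a + b + of_nat n) k
       / (fact k * fact (n - k) * pochhammer (1 + a) k)"

definition jacobi_poly :: "'a::real_normed_field \<Rightarrow> 'a \<Rightarrow> nat \<Rightarrow> 'a \<Rightarrow> 'a" where
  "jacobi_poly a b n u = (\<Sum>k\<le>n. jacobi_coeff a b n k * u ^ k)"

lemma jacobiP_eq_jacobi_poly: "jacobiP a b n z w = jacobi_poly a b n ((z - csqrt w) / 2)"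
  by (simp add: jacobiP_def jacobi_poly_def jacobi_coeff_def atLeast0AtMost)

lemma jacobi_coeff_Suc:
  assumes "1 + a \<notin> \<int>\<^sub>\<le>\<^sub>0"
  shows "of_nat (Suc k) * jacobi_coeff a b (Suc m) (Suc k)
         = (1 + a + b + of_nat (Suc m)) * jacobi_coeff (1 + a) (1 + b) m k"
proof -
  define A where "A = 1 + a"
  define c where "c = 1 + a + b + of_nat (Suc m)"
  have "pochhammer A (Suc k) \<noteq> 0"
    using assms pochhammer_eq_0_imp_nonpos_Int unfolding A_def by blast
  then have nonzero: "A \<noteq> 0" "pochhammer (A + 1) k \<noteq> 0"
    by (simp_all add: pochhammer_rec)
  have coeff_shifted: "jacobi_coeff (1 + a) (1 + b) m k
      = pochhammer (A + 1) m * pochhammer (c + 1) k / (fact k * fact (m - k) * pochhammer (A + 1) k)"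
    by (simp add: jacobi_coeff_def A_def c_def add_ac)
  have coeff_Suc: "jacobi_coeff a b (Suc m) (Suc k)
      = A * pochhammer (A + 1) m * (c * pochhammer (c + 1) k)
        / (of_nat (Suc k) * fact k * fact (m - k) * (A * pochhammer (A + 1) k))"
    unfolding jacobi_coeff_def c_def[symmetric]
    unfolding A_def[symmetric] pochhammer_rec[of A] pochhammer_rec[of c] fact_Suc diff_Suc_Suc
    by simp
  show ?thesis
    unfolding c_def[symmetric] coeff_shifted coeff_Suc
    using nonzero by (simp del: of_nat_Suc add: field_simps)
qed

lemma has_field_derivative_power_sum:
  fixes c :: "nat \<Rightarrow> 'a::real_normed_field"
  shows "((\<lambda>u. \<Sum>k\<le>Suc m. c k * u ^ k) has_field_derivative
           (\<Sum>k\<le>m. of_nat (Suc k) * c (Suc k) * x ^ k)) (at x)"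
proof -
  have "((\<lambda>u. \<Sum>k\<le>Suc m. c k * u ^ k) has_field_derivative
           (\<Sum>k\<le>Suc m. c k * (of_nat k * x ^ (k - 1)))) (at x)"
    by (intro DERIV_sum DERIV_cmult) (auto intro!: derivative_eq_intros)
  also have "(\<Sum>k\<le>Suc m. c k * (of_nat k * x ^ (k - 1)))
             = (\<Sum>k\<le>m. of_nat (Suc k) * c (Suc k) * x ^ k)"
    by (subst sum.atMost_Suc_shift) (simp add: mult_ac)
  finally show ?thesis .
qed

lemma has_field_derivative_jacobi_poly:
  assumes "1 + a \<notin> \<int>\<^sub>\<le>\<^sub>0"
  shows "(jacobi_poly a b (Suc m) has_field_derivative
           (1 + a + b + of_nat (Suc m)) * jacobi_poly (1 + a) (1 + b) m u) (at u)"
  using has_field_derivative_power_sum[of "jacobi_coeff a b (Suc m)" m u]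
  unfolding jacobi_poly_def jacobi_coeff_Suc[OF assms] sum_distrib_left
  by (simp add: mult.assoc)

lemma deriv_add_csqrt_deriv_csqrt_shift:
  assumes "(Q has_field_derivative Q') (at ((z - csqrt w) / 2))" and "w \<notin> \<real>\<^sub>\<le>\<^sub>0"
  shows "deriv (\<lambda>z'. Q ((z' - csqrt w) / 2)) z + csqrt w * deriv (\<lambda>w'. Q ((z - csqrt w') / 2)) w
         = Q' / 4"
proof -
  have "((\<lambda>z'. Q ((z' - csqrt w) / 2)) has_field_derivative Q' * (1 / 2)) (at z)"
    by (rule DERIV_chain'[where f = "\<lambda>z'. (z' - csqrt w) / 2", OF _ assms(1)])
       (auto intro!: derivative_eq_intros)
  moreover have "((\<lambda>w'. Q ((z - csqrt w') / 2)) has_field_derivative Q' * (- 1 / (4 * csqrt w))) (at w)"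
    by (rule DERIV_chain'[where f = "\<lambda>w'. (z - csqrt w') / 2", OF _ assms(1)])
       (use assms(2) in \<open>auto intro!: derivative_eq_intros\<close>)
  moreover have "csqrt w \<noteq> 0"
    using assms(2) by auto
  ultimately show ?thesis
    by (simp add: DERIV_imp_deriv field_simps)
qed

theorem mainTheorem1:
  fixes a b z w :: complex and n :: nat
  assumes "Re a > -1" and "Re b > -1" and "n \<ge> 1"
    and "cmod z < 1" and "cmod w < 1"
    and "w \<notin> complex_of_real ` {-1<..0}"
  shows "deriv (\<lambda>z'. jacobiP a b n z' w) z
         + csqrt w * deriv (\<lambda>w'. jacobiP a b n z w') w
         - (1 + a + b + of_nat n) / 4 * jacobiP (1 + a) (1 + b) (n - 1) z w = 0"
proof -
  obtain m where n: "n = Suc m"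
    using assms(3) by (cases n) auto
  have a: "1 + a \<notin> \<int>\<^sub>\<le>\<^sub>0"
    using assms(1) nonpos_Ints_subset_nonpos_Reals by (auto simp: complex_nonpos_Reals_iff)
  have w: "w \<notin> \<real>\<^sub>\<le>\<^sub>0"
  proof
    assume "w \<in> \<real>\<^sub>\<le>\<^sub>0"
    then obtain r where "w = complex_of_real r" "r \<le> 0"
      by (auto elim: nonpos_Reals_cases)
    with assms(5,6) show False
      by auto
  qed
  show ?thesis
    using deriv_add_csqrt_deriv_csqrt_shift[OF has_field_derivative_jacobi_poly[OF a] w]
    unfolding jacobiP_eq_jacobi_poly n by simp
qed

end
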